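(* There exists a function $\beta:\mathbb{N}\times\mathbb{N}\to\mathbb{N}$ with the following property. Let $G=(A,B,E)$ be a bipartite graph with $A=\{\ell_1,\dots,\ell_m\}$, and let $\mathcal{P}=\{P_1,\dots,P_m\}$ be a partition of $B$ such that (1) for every $i\in[m]$, $P_i\subseteq N_G(\ell_i)$; and (2) for every $i\in[m]$, $N_G(\ell_i)\cap P_j=\emptyset$ for all $j<i$ and $N_G(\ell_i)\cap P_j\neq\emptyset$ for all $j>i$. Suppose further that $m>\beta(a,b)$ for some $a,b\in\mathbb{N}$. Then $G$ contains the half-graph $H_a$ of order $a$ as an induced subgraph, or $G$ contains a $1$-subdivision of $K_b$ as an induced subgraph in which all principal vertices are in $A$.
   Context: $[m]=\{1,\dots,m\}$. The half-graph $H_a$ of order $a$ has vertices $u_1,\dots,u_a,v_1,\dots,v_a$ and edges $u_iv_j$ for $1\le i\le j\le a$. A $1$-subdivision of $K_b$ is obtained from the complete graph $K_b$ by replacing each edge by a path with one internal vertex; the original $b$ vertices are the principal vertices. *)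

theory Defs
  imports Main
begin

definition bipartite_graph :: "nat set \<Rightarrow> nat set \<Rightarrow> (nat \<Rightarrow> nat \<Rightarrow> bool) \<Rightarrow> bool" where
  "bipartite_graph A B E \<longleftrightarrow> finite A \<and> finite B \<and> A \<inter> B = {} \<and>
     (\<forall>x y. E x y \<longrightarrow> E y x) \<and>
     (\<forall>x y. E x y \<longrightarrow> (x \<in> A \<and> y \<in> B) \<or> (x \<in> B \<and> y \<in> A))"

definition nbhd :: "(nat \<Rightarrow> nat \<Rightarrow> bool) \<Rightarrow> nat \<Rightarrow> nat set" where
  "nbhd E x = {y. E x y}"

definition induced_embedding ::
  "('w \<Rightarrow> 'w \<Rightarrow> bool) \<Rightarrow> 'w set \<Rightarrow> (nat \<Rightarrow> nat \<Rightarrow> bool) \<Rightarrow> nat set \<Rightarrow> ('w \<Rightarrow> nat) \<Rightarrow> bool" where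
  "induced_embedding H W E V f \<longleftrightarrow> inj_on f W \<and> f ` W \<subseteq> V \<and>
     (\<forall>x\<in>W. \<forall>y\<in>W. x \<noteq> y \<longrightarrow> (E (f x) (f y) \<longleftrightarrow> H x y))"

text \<open>Half-graph H_a: u_i = Inl i, v_j = Inr j (1 \<le> i,j \<le> a), edges u_i v_j for i \<le> j.\<close>
definition half_graph_vertices :: "nat \<Rightarrow> (nat + nat) set" where
  "half_graph_vertices a = Inl ` {1..a} \<union> Inr ` {1..a}"

fun half_graph_edge :: "nat + nat \<Rightarrow> nat + nat \<Rightarrow> bool" where
  "half_graph_edge (Inl i) (Inr j) = (i \<le> j)"
| "half_graph_edge (Inr j) (Inl i) = (i \<le> j)"
| "half_graph_edge _ _ = False"

text \<open>1-subdivision of K_b: principal vertices Inl i (1 \<le> i \<le> b), subdivision vertex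
Inr (i,j) for 1 \<le> i < j \<le> b, adjacent exactly to Inl i and Inl j.\<close>
definition subdiv_vertices :: "nat \<Rightarrow> (nat + nat \<times> nat) set" where
  "subdiv_vertices b = Inl ` {1..b} \<union> Inr ` {(i, j). 1 \<le> i \<and> i < j \<and> j \<le> b}"

fun subdiv_edge :: "nat + nat \<times> nat \<Rightarrow> nat + nat \<times> nat \<Rightarrow> bool" where
  "subdiv_edge (Inl k) (Inr (i, j)) = (k = i \<or> k = j)"
| "subdiv_edge (Inr (i, j)) (Inl k) = (k = i \<or> k = j)"
| "subdiv_edge _ _ = False"

end

(* For i < j choose w_ij in P_j adjacent to l_i. Then l_j is adjacent to w_ij too, while no l_k
   with k > j is. Colour a triple i < j < k by whether l_j sees w_ik and, if not, whether l_i sees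
   w_jk. Ramsey's theorem for triples yields a monochromatic set of a + b + 1 indices, renumbered
   0, ..., a + b. In the first colour l_s and w_0t (1 <= s, t <= a) span an induced half-graph; in
   the second l_(s-1) and w_(t-1)a do; in the third the w_ij with i < j < b are the subdivision
   vertices of an induced 1-subdivision of K_b with principal vertices l_0, ..., l_(b-1). *)

theory Submission
  imports Defs "HOL-Library.Ramsey"
begin

lemma bipartite_induced_embeddingI:
  fixes H :: "'x + 'y \<Rightarrow> 'x + 'y \<Rightarrow> bool"
  assumes bip: "bipartite_graph A B E"
    and UA: "U ` X \<subseteq> A" and VB: "V ` Y \<subseteq> B"
    and inj: "inj_on U X" "inj_on V Y"
    and H_left: "\<And>x x'. \<not> H (Inl x) (Inl x')" and H_right: "\<And>y y'. \<not> H (Inr y) (Inr y')"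
    and H_sym: "\<And>x y. H (Inr y) (Inl x) = H (Inl x) (Inr y)"
    and adj: "\<And>x y. x \<in> X \<Longrightarrow> y \<in> Y \<Longrightarrow> E (U x) (V y) \<longleftrightarrow> H (Inl x) (Inr y)"
  shows "induced_embedding H (Inl ` X \<union> Inr ` Y) E (A \<union> B) (case_sum U V)"
proof -
  have AB: "A \<inter> B = {}" and E_sym: "\<And>u v. E u v = E v u"
    and E_between: "\<And>u v. E u v \<Longrightarrow> (u \<in> A \<and> v \<in> B) \<or> (u \<in> B \<and> v \<in> A)"
    using bip unfolding bipartite_graph_def by blast+
  have "inj_on (case_sum U V) (Inl ` X \<union> Inr ` Y)"
  proof (rule inj_onI)
    fix u v assume "u \<in> Inl ` X \<union> Inr ` Y" "v \<in> Inl ` X \<union> Inr ` Y"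
      and "case_sum U V u = case_sum U V v"
    then show "u = v"
      using inj UA VB AB by (auto dest: inj_onD) (metis disjoint_iff image_subset_iff)+
  qed
  moreover have "E (case_sum U V u) (case_sum U V v) \<longleftrightarrow> H u v"
    if "u \<in> Inl ` X \<union> Inr ` Y" "v \<in> Inl ` X \<union> Inr ` Y" for u v
  proof -
    have "\<not> E p q" if "p \<in> A" "q \<in> A" for p q
      using that AB E_between by blast
    moreover have "\<not> E p q" if "p \<in> B" "q \<in> B" for p q
      using that AB E_between by blast
    ultimately show ?thesis
      using that UA VB H_left H_right by (auto simp: adj H_sym E_sym image_subset_iff)
  qed
  ultimately show ?thesis
    using UA VB unfolding induced_embedding_def by auto
qed

lemma half_graph_embeddingI:
  assumes bip: "bipartite_graph A B E"
    and UA: "U ` {1..a} \<subseteq> A" and VB: "V ` {1..a} \<subseteq> B"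
    and adj: "\<And>s t. s \<in> {1..a} \<Longrightarrow> t \<in> {1..a} \<Longrightarrow> E (U s) (V t) \<longleftrightarrow> s \<le> t"
  shows "\<exists>f. induced_embedding half_graph_edge (half_graph_vertices a) E (A \<union> B) f"
proof -
  have "inj_on U {1..a}"
    by (rule inj_onI) (metis adj order.refl order.antisym)
  moreover have "inj_on V {1..a}"
    by (rule inj_onI) (metis adj order.refl order.antisym)
  ultimately show ?thesis
    using bipartite_induced_embeddingI[OF bip UA VB, of half_graph_edge] adj
    unfolding half_graph_vertices_def by fastforce
qed

lemma subdivision_embeddingI:
  assumes bip: "bipartite_graph A B E"
    and UA: "U ` {1..b} \<subseteq> A" and U_inj: "inj_on U {1..b}"
    and VB: "\<And>i j. 1 \<le> i \<Longrightarrow> i < j \<Longrightarrow> j \<le> b \<Longrightarrow> V i j \<in> B"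
    and adj: "\<And>k i j. k \<in> {1..b} \<Longrightarrow> 1 \<le> i \<Longrightarrow> i < j \<Longrightarrow> j \<le> b \<Longrightarrow>
      E (U k) (V i j) \<longleftrightarrow> k = i \<or> k = j"
  shows "\<exists>f. induced_embedding subdiv_edge (subdiv_vertices b) E (A \<union> B) f \<and>
           (\<forall>i\<in>{1..b}. f (Inl i) \<in> A)"
proof -
  define pairs where "pairs = {(i, j). 1 \<le> i \<and> i < j \<and> (j::nat) \<le> b}"
  have "inj_on (case_prod V) pairs"
  proof (rule inj_onI, clarify)
    fix i j i' j' assume ij: "(i, j) \<in> pairs" and ij': "(i', j') \<in> pairs"
      and "V i j = V i' j'"
    have same: "k = i \<or> k = j \<longleftrightarrow> k = i' \<or> k = j'" if "k \<in> {1..b}" for k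
      using adj[OF that, of i j] adj[OF that, of i' j'] ij ij' \<open>V i j = V i' j'\<close>
      unfolding pairs_def by auto
    show "i = i' \<and> j = j'"
      using same[of i] same[of i'] same[of j] ij ij' unfolding pairs_def by auto
  qed
  moreover have "case_prod V ` pairs \<subseteq> B"
    using VB unfolding pairs_def by auto
  ultimately have "induced_embedding subdiv_edge (subdiv_vertices b) E (A \<union> B)
      (case_sum U (case_prod V))"
    using bipartite_induced_embeddingI[OF bip UA, of "case_prod V" pairs subdiv_edge] U_inj adj
    unfolding subdiv_vertices_def pairs_def by fastforce
  moreover have "\<forall>i\<in>{1..b}. case_sum U (case_prod V) (Inl i) \<in> A"
    using UA by auto
  ultimately show ?thesis
    by blast
qed

lemma finite_strict_mono_enumeration:
  fixes H :: "'a::linorder set"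
  assumes "finite H"
  obtains h where "strict_mono_on {..<card H} h" "h ` {..<card H} = H"
proof
  let ?xs = "sorted_list_of_set H"
  show "strict_mono_on {..<card H} ((!) ?xs)"
    by (rule strict_mono_onI) (simp add: assms sorted_wrt_nth_less)
  show "(!) ?xs ` {..<card H} = H"
    using assms by (simp add: lessThan_atLeast0 nth_image)
qed

lemma ramsey_ordered_triples:
  fixes f :: "nat \<Rightarrow> nat \<Rightarrow> nat \<Rightarrow> nat"
  assumes ramsey: "partn_lst {..<N} (replicate n K) 3"
    and f: "\<And>x y z. x < y \<Longrightarrow> y < z \<Longrightarrow> z < N \<Longrightarrow> f x y z < n"
  obtains c h where "c < n" "strict_mono_on {..<K} h" "h ` {..<K} \<subseteq> {..<N}"
    "\<And>t1 t2 t3. t1 < t2 \<Longrightarrow> t2 < t3 \<Longrightarrow> t3 < K \<Longrightarrow> f (h t1) (h t2) (h t3) = c"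
proof -
  define col where "col T = f (Min T) (Max (T - {Max T})) (Max T)" for T
  have col_triple: "col {x, y, z} = f x y z" if "x < y" "y < z" for x y z
  proof -
    have "{x, y, z} - {z} = {x, y}"
      using that by auto
    then show ?thesis
      using that unfolding col_def by (simp add: min_def max_def)
  qed
  have "col \<in> nsets {..<N} 3 \<rightarrow> {..<n}"
    using f by (auto simp: ordered_nsets_3_eq col_triple)
  then obtain c H where c: "c < n" and "H \<in> nsets {..<N} K" and mono: "col ` nsets H 3 \<subseteq> {c}"
    using partn_lstE[OF ramsey] by (metis length_replicate nth_replicate)
  then have "finite H" "card H = K" "H \<subseteq> {..<N}"
    by (auto simp: nsets_def)
  then obtain h where h: "strict_mono_on {..<K} h" "h ` {..<K} = H"
    using finite_strict_mono_enumeration by metis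
  show thesis
  proof (rule that[OF c h(1)])
    show "h ` {..<K} \<subseteq> {..<N}"
      using h(2) \<open>H \<subseteq> {..<N}\<close> by simp
    fix t1 t2 t3 assume t: "t1 < t2" "t2 < t3" "t3 < K"
    then have lt: "h t1 < h t2" "h t2 < h t3"
      using strict_mono_onD[OF h(1)] by auto
    moreover have "{h t1, h t2, h t3} \<in> nsets H 3"
      using t lt h(2) by (auto simp: nsets_def card_insert_if)
    ultimately show "f (h t1) (h t2) (h t3) = c"
      using mono col_triple by fastforce
  qed
qed

locale ladder =
  fixes A B :: "nat set" and E :: "nat \<Rightarrow> nat \<Rightarrow> bool"
    and K :: nat and L :: "nat \<Rightarrow> nat" and W :: "nat \<Rightarrow> nat \<Rightarrow> nat"
  assumes bipartite: "bipartite_graph A B E"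
    and L_in: "t < K \<Longrightarrow> L t \<in> A"
    and L_inj: "inj_on L {..<K}"
    and W_in: "t < s \<Longrightarrow> s < K \<Longrightarrow> W t s \<in> B"
    and W_adj_lower: "t < s \<Longrightarrow> s < K \<Longrightarrow> E (L t) (W t s)"
    and W_adj_upper: "t < s \<Longrightarrow> s < K \<Longrightarrow> E (L s) (W t s)"
    and W_nonadj_above: "t < s \<Longrightarrow> s < r \<Longrightarrow> r < K \<Longrightarrow> \<not> E (L r) (W t s)"
begin

lemma ladder_reindex:
  assumes h: "strict_mono_on {..<K'} h" "h ` {..<K'} \<subseteq> {..<K}"
  shows "ladder A B E K' (L \<circ> h) (\<lambda>t s. W (h t) (h s))"
proof
  have "inj_on h {..<K'}"
    using h(1) by (rule strict_mono_on_imp_inj_on)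
  then show "inj_on (L \<circ> h) {..<K'}"
    using inj_on_subset[OF L_inj h(2)] by (rule comp_inj_on)
  have hK: "t < K' \<Longrightarrow> h t < K" for t
    using h(2) by auto
  have hlt: "t < s \<Longrightarrow> s < K' \<Longrightarrow> h t < h s" for t s
    using strict_mono_onD[OF h(1)] by simp
  show "bipartite_graph A B E"
    by (rule bipartite)
  show "t < K' \<Longrightarrow> (L \<circ> h) t \<in> A" for t
    using L_in hK by simp
  show "t < s \<Longrightarrow> s < K' \<Longrightarrow> W (h t) (h s) \<in> B" for t s
    using W_in hK hlt by simp
  show "t < s \<Longrightarrow> s < K' \<Longrightarrow> E ((L \<circ> h) t) (W (h t) (h s))" for t s
    using W_adj_lower hK hlt by simp
  show "t < s \<Longrightarrow> s < K' \<Longrightarrow> E ((L \<circ> h) s) (W (h t) (h s))" for t s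
    using W_adj_upper hK hlt by simp
  show "t < s \<Longrightarrow> s < r \<Longrightarrow> r < K' \<Longrightarrow> \<not> E ((L \<circ> h) r) (W (h t) (h s))" for t s r
    using W_nonadj_above hK hlt by (metis comp_apply order.strict_trans)
qed

lemma half_graph_if_middle_adjacent:
  assumes "a < K"
    and middle: "\<And>t1 t2 t3. t1 < t2 \<Longrightarrow> t2 < t3 \<Longrightarrow> t3 < K \<Longrightarrow> E (L t2) (W t1 t3)"
  shows "\<exists>f. induced_embedding half_graph_edge (half_graph_vertices a) E (A \<union> B) f"
proof (rule half_graph_embeddingI[OF bipartite, of L _ "W 0"])
  show "E (L s) (W 0 t) \<longleftrightarrow> s \<le> t" if "s \<in> {1..a}" "t \<in> {1..a}" for s t
    using middle[of 0 s t] W_adj_upper[of 0 t] W_nonadj_above[of 0 t s] that \<open>a < K\<close>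
    by (cases s t rule: linorder_cases) auto
qed (use L_in W_in \<open>a < K\<close> in auto)

lemma half_graph_if_lower_adjacent:
  assumes "a < K"
    and lower: "\<And>t1 t2 t3. t1 < t2 \<Longrightarrow> t2 < t3 \<Longrightarrow> t3 < K \<Longrightarrow>
      \<not> E (L t2) (W t1 t3) \<and> E (L t1) (W t2 t3)"
  shows "\<exists>f. induced_embedding half_graph_edge (half_graph_vertices a) E (A \<union> B) f"
proof (rule half_graph_embeddingI[OF bipartite, of "\<lambda>s. L (s - 1)" _ "\<lambda>t. W (t - 1) a"])
  show "E (L (s - 1)) (W (t - 1) a) \<longleftrightarrow> s \<le> t" if "s \<in> {1..a}" "t \<in> {1..a}" for s t
    using lower[of "s - 1" "t - 1" a] lower[of "t - 1" "s - 1" a] W_adj_lower[of "t - 1" a]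
      that \<open>a < K\<close>
    by (cases s t rule: linorder_cases) auto
qed (use L_in W_in \<open>a < K\<close> in auto)

lemma subdivision_if_nonadjacent:
  assumes "b \<le> K"
    and nonadj: "\<And>t1 t2 t3. t1 < t2 \<Longrightarrow> t2 < t3 \<Longrightarrow> t3 < K \<Longrightarrow>
      \<not> E (L t2) (W t1 t3) \<and> \<not> E (L t1) (W t2 t3)"
  shows "\<exists>f. induced_embedding subdiv_edge (subdiv_vertices b) E (A \<union> B) f \<and>
           (\<forall>i\<in>{1..b}. f (Inl i) \<in> A)"
proof (rule subdivision_embeddingI[OF bipartite, of "\<lambda>k. L (k - 1)" _ "\<lambda>i j. W (i - 1) (j - 1)"])
  show "inj_on (\<lambda>k. L (k - 1)) {1..b}"
  proof (rule inj_onI)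
    fix x y assume xy: "x \<in> {1..b}" "y \<in> {1..b}" and "L (x - 1) = L (y - 1)"
    moreover have "x - 1 < K" "y - 1 < K"
      using xy \<open>b \<le> K\<close> by auto
    ultimately have "x - 1 = y - 1"
      using inj_onD[OF L_inj] by blast
    then show "x = y"
      using xy by auto
  qed
  show "E (L (k - 1)) (W (i - 1) (j - 1)) \<longleftrightarrow> k = i \<or> k = j"
    if "k \<in> {1..b}" "1 \<le> i" "i < j" "j \<le> b" for k i j
  proof -
    consider "k < i" | "k = i" | "i < k" "k < j" | "k = j" | "j < k"
      by linarith
    then show ?thesis
      using nonadj[of "k - 1" "i - 1" "j - 1"] nonadj[of "i - 1" "k - 1" "j - 1"]
        W_adj_lower[of "i - 1" "j - 1"] W_adj_upper[of "i - 1" "j - 1"]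
        W_nonadj_above[of "i - 1" "j - 1" "k - 1"] that \<open>b \<le> K\<close>
      by cases auto
  qed
qed (use L_in W_in \<open>b \<le> K\<close> in auto)

lemma half_graph_or_subdivision:
  assumes ramsey: "partn_lst {..<N} (replicate 3 (Suc (a + b))) 3" and "N \<le> K"
  shows "(\<exists>f. induced_embedding half_graph_edge (half_graph_vertices a) E (A \<union> B) f) \<or>
    (\<exists>f. induced_embedding subdiv_edge (subdiv_vertices b) E (A \<union> B) f \<and>
      (\<forall>i\<in>{1..b}. f (Inl i) \<in> A))"
proof -
  define colour :: "nat \<Rightarrow> nat \<Rightarrow> nat \<Rightarrow> nat" where
    "colour x y z = (if E (L y) (W x z) then 0 else if E (L x) (W y z) then 2 else 1)" for x y z
  have colour_bound: "colour x y z < 3" for x y z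
    by (simp add: colour_def)
  have colour_0: "colour x y z = 0 \<Longrightarrow> E (L y) (W x z)"
    and colour_2: "colour x y z = 2 \<Longrightarrow> \<not> E (L y) (W x z) \<and> E (L x) (W y z)"
    and colour_1: "colour x y z = 1 \<Longrightarrow> \<not> E (L y) (W x z) \<and> \<not> E (L x) (W y z)" for x y z
    by (simp_all add: colour_def split: if_splits)
  obtain c h where "c < 3" and h: "strict_mono_on {..<Suc (a + b)} h" "h ` {..<Suc (a + b)} \<subseteq> {..<N}"
    and homogeneous: "\<And>t1 t2 t3. t1 < t2 \<Longrightarrow> t2 < t3 \<Longrightarrow> t3 < Suc (a + b) \<Longrightarrow>
      colour (h t1) (h t2) (h t3) = c"
    using ramsey_ordered_triples[where f = colour, OF ramsey colour_bound] by blast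
  have h_K: "h ` {..<Suc (a + b)} \<subseteq> {..<K}"
    using h(2) \<open>N \<le> K\<close> by (meson lessThan_subset_iff order.trans)
  interpret sub: ladder A B E "Suc (a + b)" "L \<circ> h" "\<lambda>t s. W (h t) (h s)"
    by (rule ladder_reindex[OF h(1) h_K])
  consider "c = 0" | "c = 2" | "c = 1"
    using \<open>c < 3\<close> by linarith
  then show ?thesis
  proof cases
    case 1
    have middle: "E ((L \<circ> h) t2) (W (h t1) (h t3))"
      if "t1 < t2" "t2 < t3" "t3 < Suc (a + b)" for t1 t2 t3
      using colour_0 homogeneous[OF that] 1 by simp
    have "\<exists>f. induced_embedding half_graph_edge (half_graph_vertices a) E (A \<union> B) f"
      by (rule sub.half_graph_if_middle_adjacent[OF _ middle]) simp
    then show ?thesis ..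
  next
    case 2
    have lower: "\<not> E ((L \<circ> h) t2) (W (h t1) (h t3)) \<and> E ((L \<circ> h) t1) (W (h t2) (h t3))"
      if "t1 < t2" "t2 < t3" "t3 < Suc (a + b)" for t1 t2 t3
      using colour_2 homogeneous[OF that] 2 by simp
    have "\<exists>f. induced_embedding half_graph_edge (half_graph_vertices a) E (A \<union> B) f"
      by (rule sub.half_graph_if_lower_adjacent[OF _ lower]) simp
    then show ?thesis ..
  next
    case 3
    have nonadj: "\<not> E ((L \<circ> h) t2) (W (h t1) (h t3)) \<and> \<not> E ((L \<circ> h) t1) (W (h t2) (h t3))"
      if "t1 < t2" "t2 < t3" "t3 < Suc (a + b)" for t1 t2 t3
      using colour_1 homogeneous[OF that] 3 by simp
    have "\<exists>f. induced_embedding subdiv_edge (subdiv_vertices b) E (A \<union> B) f \<and>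
        (\<forall>i\<in>{1..b}. f (Inl i) \<in> A)"
      by (rule sub.subdivision_if_nonadjacent[OF _ nonadj]) simp
    then show ?thesis ..
  qed
qed

end

lemma ladder_of_ordered_partition:
  assumes bip: "bipartite_graph A B E"
    and l_inj: "inj_on l {1..m}" and l_A: "l ` {1..m} \<subseteq> A" and P_B: "(\<Union>i\<in>{1..m}. P i) \<subseteq> B"
    and P_nbhd: "\<forall>i\<in>{1..m}. P i \<subseteq> nbhd E (l i)"
    and backward: "\<forall>i\<in>{1..m}. \<forall>j\<in>{1..m}. j < i \<longrightarrow> nbhd E (l i) \<inter> P j = {}"
    and forward: "\<forall>i\<in>{1..m}. \<forall>j\<in>{1..m}. i < j \<longrightarrow> nbhd E (l i) \<inter> P j \<noteq> {}"
  obtains W where "ladder A B E m (\<lambda>t. l (Suc t)) W"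
proof
  define W where "W t s = (SOME v. v \<in> P (Suc s) \<and> E (l (Suc t)) v)" for t s
  have W: "W t s \<in> P (Suc s)" "E (l (Suc t)) (W t s)" if "t < s" "s < m" for t s
  proof -
    have "nbhd E (l (Suc t)) \<inter> P (Suc s) \<noteq> {}"
      using forward that by simp
    then have "\<exists>v. v \<in> P (Suc s) \<and> E (l (Suc t)) v"
      unfolding nbhd_def by blast
    then show "W t s \<in> P (Suc s)" "E (l (Suc t)) (W t s)"
      unfolding W_def by (metis (mono_tags, lifting) someI_ex)+
  qed
  show "ladder A B E m (\<lambda>t. l (Suc t)) W"
  proof
    show "inj_on (\<lambda>t. l (Suc t)) {..<m}"
    proof (rule inj_onI)
      fix x y assume "x \<in> {..<m}" "y \<in> {..<m}" "l (Suc x) = l (Suc y)"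
      then show "x = y"
        using inj_onD[OF l_inj, of "Suc x" "Suc y"] by simp
    qed
    fix t s r
    show "t < m \<Longrightarrow> l (Suc t) \<in> A"
      using l_A by (simp add: image_subset_iff)
    show "W t s \<in> B" if "t < s" "s < m"
      using W(1)[OF that] P_B that by (auto simp: UN_subset_iff)
    show "t < s \<Longrightarrow> s < m \<Longrightarrow> E (l (Suc t)) (W t s)"
      using W(2) .
    show "t < s \<Longrightarrow> s < m \<Longrightarrow> E (l (Suc s)) (W t s)"
      using W(1) P_nbhd unfolding nbhd_def by fastforce
    assume "t < s" "s < r" "r < m"
    then have "nbhd E (l (Suc r)) \<inter> P (Suc s) = {}"
      using backward by simp
    then show "\<not> E (l (Suc r)) (W t s)"
      using W(1) \<open>t < s\<close> \<open>s < r\<close> \<open>r < m\<close> unfolding nbhd_def by auto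
  qed (rule bip)
qed

theorem lemma4p11:
  shows "\<exists>\<beta> :: nat \<Rightarrow> nat \<Rightarrow> nat.
    \<forall>(A :: nat set) (B :: nat set) (E :: nat \<Rightarrow> nat \<Rightarrow> bool) (m :: nat)
      (l :: nat \<Rightarrow> nat) (P :: nat \<Rightarrow> nat set) (a :: nat) (b :: nat).
      bipartite_graph A B E \<and>
      inj_on l {1..m} \<and> A = l ` {1..m} \<and>
      (\<forall>i\<in>{1..m}. P i \<noteq> {}) \<and>
      (\<forall>i\<in>{1..m}. \<forall>j\<in>{1..m}. i \<noteq> j \<longrightarrow> P i \<inter> P j = {}) \<and>
      (\<Union>i\<in>{1..m}. P i) = B \<and>
      (\<forall>i\<in>{1..m}. P i \<subseteq> nbhd E (l i)) \<and>
      (\<forall>i\<in>{1..m}. \<forall>j\<in>{1..m}. j < i \<longrightarrow> nbhd E (l i) \<inter> P j = {}) \<and>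
      (\<forall>i\<in>{1..m}. \<forall>j\<in>{1..m}. i < j \<longrightarrow> nbhd E (l i) \<inter> P j \<noteq> {}) \<and>
      m > \<beta> a b
      \<longrightarrow>
      (\<exists>f. induced_embedding half_graph_edge (half_graph_vertices a) E (A \<union> B) f) \<or>
      (\<exists>f. induced_embedding subdiv_edge (subdiv_vertices b) E (A \<union> B) f \<and>
           (\<forall>i\<in>{1..b}. f (Inl i) \<in> A))"
proof -
  define \<beta> where "\<beta> a b = (SOME N :: nat. partn_lst {..<N} (replicate 3 (Suc (a + b))) 3)" for a b
  have ramsey: "partn_lst {..<\<beta> a b} (replicate 3 (Suc (a + b))) 3" for a b
    unfolding \<beta>_def by (rule someI_ex[OF ramsey_full])
  show ?thesis
  proof (intro exI[of _ \<beta>] allI impI, elim conjE)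
    fix A B E m l P a b
    assume bip: "bipartite_graph A B E" and l_inj: "inj_on l {1..m}" and A: "A = l ` {1..m}"
      and B: "(\<Union>i\<in>{1..m}. P i) = B" and P_nbhd: "\<forall>i\<in>{1..m}. P i \<subseteq> nbhd E (l i)"
      and backward: "\<forall>i\<in>{1..m}. \<forall>j\<in>{1..m}. j < i \<longrightarrow> nbhd E (l i) \<inter> P j = {}"
      and forward: "\<forall>i\<in>{1..m}. \<forall>j\<in>{1..m}. i < j \<longrightarrow> nbhd E (l i) \<inter> P j \<noteq> {}"
      and "\<beta> a b < m"
    have l_A: "l ` {1..m} \<subseteq> A" and P_B: "(\<Union>i\<in>{1..m}. P i) \<subseteq> B"
      using A B by simp_all
    obtain W where "ladder A B E m (\<lambda>t. l (Suc t)) W"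
      using ladder_of_ordered_partition[OF bip l_inj l_A P_B P_nbhd backward forward] by blast
    then show "(\<exists>f. induced_embedding half_graph_edge (half_graph_vertices a) E (A \<union> B) f) \<or>
      (\<exists>f. induced_embedding subdiv_edge (subdiv_vertices b) E (A \<union> B) f \<and>
        (\<forall>i\<in>{1..b}. f (Inl i) \<in> A))"
      by (rule ladder.half_graph_or_subdivision[OF _ ramsey less_imp_le[OF \<open>\<beta> a b < m\<close>]])
  qed
qed

end
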